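(* Let $(A,v)$ and $(B,w)$ be valued abelian groups and let $f:A\to B$ be a group homomorphism. Assume there is a subset $S\subseteq A$ such that: (a) the assignment $vs\mapsto wf(s)$ for $s\in S$ defines an order preserving map $\varphi:v(S)\to w(B)$; that is, for $s,s'\in S$, $vs=vs'$ implies $wf(s)=wf(s')$, and $vs<vs'$ implies $wf(s)<wf(s')$; (b) for all $a\in A$ and $s\in S$: if $va\ge vs$ then $wf(a)\ge wf(s)$; (c) for every $b\in B\setminus\{0\}$ there is some $s\in S$ with $w(b-f(s))>wb$. Suppose further that $(A,v)$ is spherically complete. Then $f$ is surjective and $(B,w)$ is spherically complete.
   Context: A valued abelian group $(A,v)$ is an abelian group $A$ with a map $v:A\to \Gamma\cup\{\infty\}$, $a\mapsto va$, onto a totally ordered set with largest element $\infty$, such that $va=\infty\iff a=0$ and $v(a-a')\ge\min\{va,va'\}$ for all $a,a'\in A$. For $X\subseteq A$ write $v(X)=\{vx\mid x\in X\}$. For $a\in A$ and $\alpha\in v(A)$ the ball is $B_\alpha(a)=\{a'\in A\mid v(a-a')\ge\alpha\}$. A nest of balls is a set of balls totally ordered by inclusion; $(A,v)$ is spherically complete if every nest of balls has nonempty intersection. *)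

theory Defs
  imports Main
begin

text \<open>A valued abelian group: the group is the type 'a (class ab_group_add), the value
  set is (a subset of) a linearly ordered type 'g whose top element plays the role of
  infinity.\<close>

definition valued_group :: "('a::ab_group_add \<Rightarrow> 'g::{linorder,order_top}) \<Rightarrow> bool" where
  "valued_group v \<longleftrightarrow>
     (\<forall>a. v a = top \<longleftrightarrow> a = 0) \<and>
     (\<forall>a a'. v (a - a') \<ge> min (v a) (v a'))"

definition vball :: "('a::ab_group_add \<Rightarrow> 'g::linorder) \<Rightarrow> 'g \<Rightarrow> 'a \<Rightarrow> 'a set" where
  "vball v \<alpha> a = {a'. v (a - a') \<ge> \<alpha>}"

definition is_ball :: "('a::ab_group_add \<Rightarrow> 'g::linorder) \<Rightarrow> 'a set \<Rightarrow> bool" where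
  "is_ball v X \<longleftrightarrow> (\<exists>a \<alpha>. \<alpha> \<in> range v \<and> X = vball v \<alpha> a)"

definition nest_of_balls :: "('a::ab_group_add \<Rightarrow> 'g::linorder) \<Rightarrow> 'a set set \<Rightarrow> bool" where
  "nest_of_balls v N \<longleftrightarrow> (\<forall>X\<in>N. is_ball v X) \<and> (\<forall>X\<in>N. \<forall>Y\<in>N. X \<subseteq> Y \<or> Y \<subseteq> X)"

definition spherically_complete :: "('a::ab_group_add \<Rightarrow> 'g::linorder) \<Rightarrow> bool" where
  "spherically_complete v \<longleftrightarrow> (\<forall>N. nest_of_balls v N \<longrightarrow> \<Inter>N \<noteq> {})"

end

theory Submission
  imports Defs HOL.Modules
begin

text \<open>
  By (c), any approximation f a of a target y \<noteq> 0 can be improved by adding some s \<in> S with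
  w (f s) = w (y - f a), and by (a) and (b) the ball of radius v s around a consists of points whose
  images approximate y at least as well. Moving to a + s strictly improves the approximation, so
  these balls form a system that keeps shrinking; in a spherically complete group a maximal nest
  of them has a common point, which yields a contradiction. Hence f maps every ball of radius
  v s, s \<in> S, onto the ball of radius w (f s) around the image of its centre. These image balls
  are all balls of B other than singletons, so a nest of balls of B is covered by a maximal nest
  of such balls of A; a common point of the latter maps into every ball of the given nest.
\<close>

lemma valued_group_zero: "valued_group v \<Longrightarrow> v 0 = top"
  by (simp add: valued_group_def)

lemma valued_group_eq_top_iff: "valued_group v \<Longrightarrow> v a = top \<longleftrightarrow> a = 0"
  by (simp add: valued_group_def)

lemma valued_group_diff_ge:
  assumes "valued_group v" "\<alpha> \<le> v a" "\<alpha> \<le> v b"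
  shows "\<alpha> \<le> v (a - b)"
  using assms order_trans[of \<alpha> "min (v a) (v b)" "v (a - b)"] by (auto simp: valued_group_def)

lemma valued_group_minus: "valued_group v \<Longrightarrow> v (- a) = v a"
  using valued_group_diff_ge[of v "v a" 0 a] valued_group_diff_ge[of v "v (- a)" 0 "- a"]
  by (simp add: valued_group_zero order_antisym)

lemma valued_group_commute: "valued_group v \<Longrightarrow> v (a - b) = v (b - a)"
  using valued_group_minus[of v "a - b"] by simp

lemma valued_group_add_ge:
  assumes "valued_group v" "\<alpha> \<le> v a" "\<alpha> \<le> v b"
  shows "\<alpha> \<le> v (a + b)"
  using valued_group_diff_ge[of v \<alpha> a "- b"] assms by (simp add: valued_group_minus)

lemma valued_group_eq_if_close:
  assumes "valued_group v" "v y < v (y - z)"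
  shows "v z = v y"
proof (rule order_antisym)
  have "min (v z) (v (y - z)) \<le> v y"
    using assms(1) valued_group_add_ge[of v _ z "y - z"] by simp
  then show "v z \<le> v y"
    using assms(2) by (auto simp: min_le_iff_disj)
  have "min (v y) (v (y - z)) \<le> v z"
    using assms(1) valued_group_diff_ge[of v _ y "y - z"] by simp
  then show "v y \<le> v z"
    using assms(2) by (simp add: min.absorb1)
qed

lemma center_in_vball: "valued_group v \<Longrightarrow> c \<in> vball v \<alpha> c"
  by (simp add: vball_def valued_group_zero)

lemma vball_top: "valued_group v \<Longrightarrow> vball v top c = {c}"
  by (auto simp: vball_def valued_group_eq_top_iff top_unique)

lemma vball_subset_vball:
  assumes "valued_group v" "x \<in> vball v \<beta> c" "\<beta> \<le> \<alpha>"
  shows "vball v \<alpha> x \<subseteq> vball v \<beta> c"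
proof
  fix z assume "z \<in> vball v \<alpha> x"
  then have "\<beta> \<le> v (x - z)"
    using assms(3) by (simp add: vball_def)
  moreover have "\<beta> \<le> v (c - x)"
    using assms(2) by (simp add: vball_def)
  ultimately have "\<beta> \<le> v ((c - x) + (x - z))"
    using assms(1) valued_group_add_ge by blast
  then show "z \<in> vball v \<beta> c"
    by (simp add: vball_def)
qed

lemma vball_radius_le_if_psubset:
  assumes "valued_group v" "vball v \<gamma> c \<subset> vball v \<delta> d"
  shows "\<delta> \<le> \<gamma>"
proof (rule ccontr)
  assume "\<not> \<delta> \<le> \<gamma>"
  have "c \<in> vball v \<delta> d"
    using assms center_in_vball by blast
  then have "d \<in> vball v \<gamma> c"
    using \<open>\<not> \<delta> \<le> \<gamma>\<close> valued_group_commute[OF assms(1), of c d] by (simp add: vball_def)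
  then have "vball v \<delta> d \<subseteq> vball v \<gamma> c"
    using \<open>\<not> \<delta> \<le> \<gamma>\<close> vball_subset_vball[OF assms(1)] by simp
  with assms(2) show False
    by blast
qed

lemma singleton_in_nest_imp_mem_Inter:
  assumes "valued_group v" "nest_of_balls v N" "{c} \<in> N"
  shows "c \<in> \<Inter>N"
proof
  fix X assume "X \<in> N"
  then obtain x \<alpha> where "X = vball v \<alpha> x"
    using assms(2) by (auto simp: nest_of_balls_def is_ball_def)
  then have "x \<in> X"
    using assms(1) center_in_vball by blast
  then show "c \<in> X"
    using assms(2,3) \<open>X \<in> N\<close> unfolding nest_of_balls_def by blast
qed

lemma subset_maxchain_lower_bound_mem:
  assumes "subset.maxchain U C" "Z \<in> U" "\<And>X. X \<in> C \<Longrightarrow> Z \<subseteq> X"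
  shows "Z \<in> C"
proof (rule ccontr)
  assume "Z \<notin> C"
  have "subset.chain U (insert Z C)"
    using assms subset.maxchain_imp_chain[OF assms(1)]
    by (auto simp: subset.chain_def)
  then show False
    using assms(1) \<open>Z \<notin> C\<close> by (auto simp: subset.maxchain_def)
qed

lemma spherically_complete_chain_Inter:
  assumes "spherically_complete v" "subset.chain U C" "\<And>X. X \<in> U \<Longrightarrow> is_ball v X"
  obtains x where "\<And>X. X \<in> C \<Longrightarrow> x \<in> X"
proof -
  have "nest_of_balls v C"
    using assms(2,3) unfolding nest_of_balls_def subset.chain_def by blast
  then show thesis
    using assms(1) that unfolding spherically_complete_def by blast
qed

lemma spherically_complete_no_shrinking_balls:
  assumes "spherically_complete v" "R \<noteq> {}"
    and ball: "\<And>a. a \<in> R \<Longrightarrow> is_ball v (B a)"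
    and into: "\<And>a. a \<in> R \<Longrightarrow> B a \<subseteq> R"
    and nested: "\<And>a a'. a \<in> R \<Longrightarrow> a' \<in> B a \<Longrightarrow> B a' \<subseteq> B a"
    and shrinking: "\<And>a. a \<in> R \<Longrightarrow> \<exists>a'\<in>B a. a \<notin> B a'"
  shows False
proof -
  obtain C where C: "subset.maxchain (B ` R) C"
    using subset.Hausdorff by blast
  then have C_sub: "C \<subseteq> B ` R"
    by (simp add: subset.maxchain_def subset.chain_def)
  obtain a where a: "\<And>X. X \<in> C \<Longrightarrow> a \<in> X"
    using spherically_complete_chain_Inter[OF assms(1) subset.maxchain_imp_chain[OF C]] ball
    by blast
  obtain a0 where "a0 \<in> R"
    using assms(2) by blast
  have "C \<noteq> {}"
  proof
    assume "C = {}"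
    then have "B a0 \<in> C"
      using subset_maxchain_lower_bound_mem[OF C, of "B a0"] \<open>a0 \<in> R\<close> by simp
    with \<open>C = {}\<close> show False
      by simp
  qed
  then obtain b where "b \<in> R" "B b \<in> C"
    using C_sub by blast
  then have "a \<in> R"
    using a into by blast
  then obtain a' where a': "a' \<in> B a" "a \<notin> B a'"
    using shrinking by blast
  have "B a' \<subseteq> X" if "X \<in> C" for X
  proof -
    obtain b where "b \<in> R" "X = B b"
      using C_sub \<open>X \<in> C\<close> by blast
    then have "B a \<subseteq> X"
      using nested a[OF \<open>X \<in> C\<close>] by simp
    moreover have "B a' \<subseteq> B a"
      using nested \<open>a \<in> R\<close> a'(1) .
    ultimately show ?thesis
      by (rule subset_trans[rotated])
  qed
  moreover have "B a' \<in> B ` R"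
    using into \<open>a \<in> R\<close> a'(1) by blast
  ultimately have "B a' \<in> C"
    using subset_maxchain_lower_bound_mem[OF C] by blast
  then show False
    using a a'(2) by blast
qed

text \<open>Hypotheses (a)--(c) of the theorem; the equality half of (a) follows from (b).\<close>

locale immediate_hom = additive f
  for f :: "'a::ab_group_add \<Rightarrow> 'b::ab_group_add" +
  fixes v :: "'a \<Rightarrow> 'g::{linorder,order_top}"
    and w :: "'b \<Rightarrow> 'h::{linorder,order_top}"
    and S :: "'a set"
  assumes valued_dom: "valued_group v"
    and valued_cod: "valued_group w"
    and value_less: "\<And>s s'. s \<in> S \<Longrightarrow> s' \<in> S \<Longrightarrow> v s < v s' \<Longrightarrow> w (f s) < w (f s')"
    and value_ge: "\<And>a s. s \<in> S \<Longrightarrow> v s \<le> v a \<Longrightarrow> w (f s) \<le> w (f a)"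
    and approximation: "\<And>y. y \<noteq> 0 \<Longrightarrow> \<exists>s\<in>S. w y < w (y - f s)"
begin

lemma value_le_iff: "s \<in> S \<Longrightarrow> s' \<in> S \<Longrightarrow> w (f s) \<le> w (f s') \<longleftrightarrow> v s \<le> v s'"
  using value_ge value_less by (meson not_le)

lemma exists_S_value: "y \<noteq> 0 \<Longrightarrow> \<exists>s\<in>S. w (f s) = w y"
  using approximation valued_group_eq_if_close[OF valued_cod] by blast

lemma exists_closer_approximation:
  assumes "s0 \<in> S" "w (f s0) \<le> w y" "v s0 \<le> v a" "f a \<noteq> y"
  obtains s where "s \<in> S" "v s0 \<le> v s" "w (f s) = w (y - f a)"
    "w (y - f a) < w (y - f (a + s))"
proof -
  obtain s where s: "s \<in> S" "w (y - f a) < w (y - f a - f s)"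
    using approximation[of "y - f a"] assms(4) by auto
  have value_s: "w (f s) = w (y - f a)"
    using valued_group_eq_if_close[OF valued_cod s(2)] .
  have "w (f s0) \<le> w (f a)"
    using value_ge assms(1,3) .
  then have "w (f s0) \<le> w (f s)"
    using value_s assms(2) valued_group_diff_ge[OF valued_cod] by simp
  then have "v s0 \<le> v s"
    using value_le_iff assms(1) s(1) by blast
  then show thesis
    using that s value_s by (simp add: add diff_diff_eq)
qed

context
  assumes complete: "spherically_complete v"
begin

lemma exists_preimage_in_vball_zero:
  assumes s0: "s0 \<in> S" and y: "w (f s0) \<le> w y"
  shows "\<exists>a. v s0 \<le> v a \<and> f a = y"
proof (rule ccontr)
  assume no_preimage: "\<nexists>a. v s0 \<le> v a \<and> f a = y"
  define R where "R = vball v (v s0) 0"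
  have mem_R: "a \<in> R \<longleftrightarrow> v s0 \<le> v a" for a
    by (simp add: R_def vball_def valued_group_minus[OF valued_dom])
  have "\<forall>a\<in>R. \<exists>s. s \<in> S \<and> v s0 \<le> v s \<and> w (f s) = w (y - f a) \<and>
      w (y - f a) < w (y - f (a + s))"
    using exists_closer_approximation[OF s0 y] no_preimage mem_R by metis
  then obtain sel where sel: "\<And>a. a \<in> R \<Longrightarrow> sel a \<in> S"
    and sel_ge: "\<And>a. a \<in> R \<Longrightarrow> v s0 \<le> v (sel a)"
    and value_sel: "\<And>a. a \<in> R \<Longrightarrow> w (f (sel a)) = w (y - f a)"
    and closer: "\<And>a. a \<in> R \<Longrightarrow> w (y - f a) < w (y - f (a + sel a))"
    by metis
  have sel_le_iff: "v (sel a) \<le> v (sel a') \<longleftrightarrow> w (y - f a) \<le> w (y - f a')"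
    if "a \<in> R" "a' \<in> R" for a a'
    using value_le_iff[OF sel sel] value_sel that by metis
  define B where "B a = vball v (v (sel a)) a" for a
  have B_sub_R: "B a \<subseteq> R" if "a \<in> R" for a
    using vball_subset_vball[OF valued_dom] that sel_ge[OF that] by (simp add: B_def R_def)
  show False
  proof (rule spherically_complete_no_shrinking_balls[OF complete, of R B])
    show "R \<noteq> {}"
      using center_in_vball[OF valued_dom] by (auto simp: R_def)
    show "is_ball v (B a)" for a
      by (auto simp: is_ball_def B_def)
    show "B a \<subseteq> R" if "a \<in> R" for a
      using B_sub_R that .
    show "B a' \<subseteq> B a" if a: "a \<in> R" and a': "a' \<in> B a" for a a'
    proof -
      have "w (f (sel a)) \<le> w (f (a - a'))"
        using value_ge sel[OF a] a' by (simp add: B_def vball_def)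
      then have "w (y - f a) \<le> w (f a - f a')"
        using value_sel[OF a] by (simp add: diff)
      then have "w (y - f a) \<le> w (y - f a')"
        using valued_group_add_ge[OF valued_cod, of _ "y - f a" "f a - f a'"] by simp
      moreover have "a' \<in> R"
        using B_sub_R a a' by blast
      ultimately show ?thesis
        using vball_subset_vball[OF valued_dom] a' sel_le_iff a by (simp add: B_def)
    qed
    show "\<exists>a'\<in>B a. a \<notin> B a'" if a: "a \<in> R" for a
    proof
      show "a + sel a \<in> B a"
        by (simp add: B_def vball_def valued_group_minus[OF valued_dom])
      then have "v (sel a) < v (sel (a + sel a))"
        using closer[OF a] sel_le_iff B_sub_R a by (meson not_le subsetD)
      then show "a \<notin> B (a + sel a)"
        by (simp add: B_def vball_def)
    qed
  qed
qed

lemma image_vball: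
  assumes "s \<in> S"
  shows "f ` vball v (v s) a = vball w (w (f s)) (f a)"
proof
  show "f ` vball v (v s) a \<subseteq> vball w (w (f s)) (f a)"
    using value_ge[OF assms] by (auto simp: vball_def simp flip: diff)
  show "vball w (w (f s)) (f a) \<subseteq> f ` vball v (v s) a"
  proof
    fix y assume "y \<in> vball w (w (f s)) (f a)"
    then obtain d where d: "v s \<le> v d" "f d = f a - y"
      using exists_preimage_in_vball_zero[OF assms] by (auto simp: vball_def)
    then have "a - d \<in> vball v (v s) a" and "f (a - d) = y"
      by (simp_all add: vball_def diff)
    then show "y \<in> f ` vball v (v s) a"
      by (metis image_eqI)
  qed
qed

lemma surjective: "surj f"
proof -
  have "y \<in> range f" for y
  proof (cases "y = 0")
    case True
    then show ?thesis
      using zero by (metis rangeI)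
  next
    case False
    then obtain s where "s \<in> S" "w (f s) = w y"
      using exists_S_value by blast
    then show ?thesis
      using exists_preimage_in_vball_zero by (metis order_refl rangeI)
  qed
  then show ?thesis
    by blast
qed

lemma ball_eq_image_vball:
  assumes "is_ball w X" "\<And>c. X \<noteq> {c}"
  obtains s a where "s \<in> S" "X = f ` vball v (v s) a"
proof -
  obtain y c where X: "X = vball w (w y) c"
    using assms(1) by (auto simp: is_ball_def)
  then have "y \<noteq> 0"
    using assms(2) vball_top[OF valued_cod] valued_group_zero[OF valued_cod] by metis
  then obtain s where "s \<in> S" "w (f s) = w y"
    using exists_S_value by blast
  moreover obtain a where "f a = c"
    using surjective by (metis surjD)
  ultimately show thesis
    using that X image_vball by metis
qed

lemma lift_into_chain:
  assumes balls: "\<And>Y. Y \<in> C \<Longrightarrow> \<exists>s\<in>S. \<exists>b. Y = vball v (v s) b"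
    and x: "\<And>Y. Y \<in> C \<Longrightarrow> x \<in> Y"
    and y: "\<And>Y. Y \<in> C \<Longrightarrow> y \<in> f ` Y"
  obtains a where "f a = y" "\<And>Y. Y \<in> C \<Longrightarrow> a \<in> Y"
proof (cases "y = f x")
  case True
  then show thesis
    using that x by blast
next
  case False
  then obtain s where s: "s \<in> S" "w (f s) = w (f x - y)"
    using exists_S_value by (metis eq_iff_diff_eq_0)
  then have "y \<in> vball w (w (f s)) (f x)"
    by (simp add: vball_def)
  then have "y \<in> f ` vball v (v s) x"
    by (simp add: image_vball[OF s(1)])
  then obtain a where a: "a \<in> vball v (v s) x" "f a = y"
    by blast
  have "vball v (v s) x \<subseteq> Y" if "Y \<in> C" for Y
  proof -
    obtain t b where t: "t \<in> S" "Y = vball v (v t) b"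
      using balls[OF \<open>Y \<in> C\<close>] by blast
    have "f x \<in> vball w (w (f t)) (f b)" "y \<in> vball w (w (f t)) (f b)"
      using x[OF \<open>Y \<in> C\<close>] y[OF \<open>Y \<in> C\<close>] t image_vball by auto
    then have "w (f t) \<le> w (f x - y)"
      using valued_group_diff_ge[OF valued_cod, of _ "f b - y" "f b - f x"]
      by (simp add: vball_def)
    then have "w (f t) \<le> w (f s)"
      using s(2) by simp
    then show ?thesis
      using vball_subset_vball[OF valued_dom] x[OF \<open>Y \<in> C\<close>] t s(1) value_le_iff by simp
  qed
  then show thesis
    using that a by blast
qed

lemma vball_subset_if_image_psubset:
  assumes "s \<in> S" "t \<in> S" "a \<in> vball v (v t) b"
    and "f ` vball v (v s) a \<subset> f ` vball v (v t) b"
  shows "vball v (v s) a \<subseteq> vball v (v t) b"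
proof -
  have "w (f t) \<le> w (f s)"
    using vball_radius_le_if_psubset[OF valued_cod] assms(1,2,4) by (simp add: image_vball)
  then show ?thesis
    using vball_subset_vball[OF valued_dom assms(3)] value_le_iff assms(1,2) by simp
qed


lemma spherically_complete_codomain: "spherically_complete w"
  unfolding spherically_complete_def
proof (intro allI impI)
  fix N assume N: "nest_of_balls w N"
  show "\<Inter>N \<noteq> {}"
  proof (cases "\<exists>c. {c} \<in> N")
    case True
    then show ?thesis
      using singleton_in_nest_imp_mem_Inter[OF valued_cod N] by blast
  next
    case False
    define U where "U = {Y. (\<exists>s\<in>S. \<exists>a. Y = vball v (v s) a) \<and> f ` Y \<in> N}"
    obtain C where C: "subset.maxchain U C"
      using subset.Hausdorff by blast
    then have C_sub: "C \<subseteq> U"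
      by (simp add: subset.maxchain_def subset.chain_def)
    have C_balls: "\<exists>s\<in>S. \<exists>b. Y = vball v (v s) b" if "Y \<in> C" for Y
      using C_sub that by (auto simp: U_def)
    obtain x where x: "\<And>Y. Y \<in> C \<Longrightarrow> x \<in> Y"
      using spherically_complete_chain_Inter[OF complete subset.maxchain_imp_chain[OF C]]
      by (auto simp: U_def is_ball_def)
    have "f x \<in> X" if "X \<in> N" for X
    proof (rule ccontr)
      assume "f x \<notin> X"
      have below: "X \<subset> f ` Y" if "Y \<in> C" for Y
      proof -
        have "f ` Y \<in> N" "f x \<in> f ` Y"
          using C_sub x that by (auto simp: U_def)
        then show ?thesis
          using N \<open>X \<in> N\<close> \<open>f x \<notin> X\<close> unfolding nest_of_balls_def by blast
      qed
      obtain s a0 where s: "s \<in> S" "X = f ` vball v (v s) a0"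
        using ball_eq_image_vball N \<open>X \<in> N\<close> False unfolding nest_of_balls_def by metis
      then have "f a0 \<in> X"
        using center_in_vball[OF valued_dom] by blast
      then obtain a where a: "f a = f a0" "\<And>Y. Y \<in> C \<Longrightarrow> a \<in> Y"
        using lift_into_chain[of C x "f a0"] C_balls x below by blast
      define Z where "Z = vball v (v s) a"
      have "f ` Z = X"
        using s a(1) by (simp add: Z_def image_vball)
      have "Z \<subseteq> Y" if Y: "Y \<in> C" for Y
      proof -
        obtain t b where "t \<in> S" "Y = vball v (v t) b"
          using C_balls[OF Y] by blast
        then show ?thesis
          using vball_subset_if_image_psubset[OF s(1)] a(2)[OF Y] below[OF Y] \<open>f ` Z = X\<close>
          by (simp add: Z_def)
      qed
      moreover have "Z \<in> U"
        using s(1) \<open>f ` Z = X\<close> \<open>X \<in> N\<close> by (auto simp: U_def Z_def)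
      ultimately have "Z \<in> C"
        using subset_maxchain_lower_bound_mem[OF C] by blast
      then show False
        using below \<open>f ` Z = X\<close> by blast
    qed
    then show ?thesis
      by blast
  qed
qed

end

end

theorem mainTheorem1:
  fixes v :: "'a::ab_group_add \<Rightarrow> 'g::{linorder,order_top}"
    and w :: "'b::ab_group_add \<Rightarrow> 'h::{linorder,order_top}"
    and f :: "'a \<Rightarrow> 'b"
    and S :: "'a set"
  assumes vA: "valued_group v"
    and wB: "valued_group w"
    and hom: "\<And>x y. f (x + y) = f x + f y"
    and a_eq: "\<And>s s'. s \<in> S \<Longrightarrow> s' \<in> S \<Longrightarrow> v s = v s' \<Longrightarrow> w (f s) = w (f s')"
    and a_less: "\<And>s s'. s \<in> S \<Longrightarrow> s' \<in> S \<Longrightarrow> v s < v s' \<Longrightarrow> w (f s) < w (f s')"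
    and b: "\<And>a s. s \<in> S \<Longrightarrow> v a \<ge> v s \<Longrightarrow> w (f a) \<ge> w (f s)"
    and c: "\<And>y. y \<noteq> 0 \<Longrightarrow> \<exists>s\<in>S. w (y - f s) > w y"
    and sc: "spherically_complete v"
  shows "surj f \<and> spherically_complete w"
proof -
  interpret immediate_hom f v w S
    by unfold_locales (use vA wB hom a_less b c in auto)
  show ?thesis
    using surjective[OF sc] spherically_complete_codomain[OF sc] by blast
qed

end
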